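(* If $\mathcal M'$ is a simple acyclic oriented matroid on a finite set $E$, then there is a total order $<$ of $E$ such that there is a strong map $\mathcal M'\longrightarrow\mathcal M(<)$.
   Context: For a finite set $E$ totally ordered by $<$, $\mathcal M(<)$ is the uniform rank 2 oriented matroid on $E$ whose signed circuits are $(\{e_1,e_3\},\{e_2\})$ and $(\{e_2\},\{e_1,e_3\})$ for $e_1<e_2<e_3$, and whose signed cocircuits are $(\{e':e'<e\},\{e'':e''>e\})$ and its opposite, for $e\in E$. For two oriented matroids $\mathcal M_1,\mathcal M_2$ on the same ground set, a strong map $\mathcal M_1\longrightarrow\mathcal M_2$ exists if every cocircuit of $\mathcal M_2$ is a covector of $\mathcal M_1$ (equivalently, every circuit of $\mathcal M_1$ is a vector of $\mathcal M_2$). *)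

theory Defs
  imports Main
begin

text \<open>Signed subsets of a ground set: pairs (X+, X-) of disjoint sets.\<close>
type_synonym 'a signed_set = "'a set \<times> 'a set"

definition supp :: "'a signed_set \<Rightarrow> 'a set" where
  "supp X = fst X \<union> snd X"

definition neg_ss :: "'a signed_set \<Rightarrow> 'a signed_set" where
  "neg_ss X = (snd X, fst X)"

definition comp_ss :: "'a signed_set \<Rightarrow> 'a signed_set \<Rightarrow> 'a signed_set" where
  "comp_ss X Y = (fst X \<union> (fst Y - snd X), snd X \<union> (snd Y - fst X))"

definition oriented_matroid :: "'a set \<Rightarrow> 'a signed_set set \<Rightarrow> bool" where
  "oriented_matroid E \<C> \<longleftrightarrow>
     (\<forall>X\<in>\<C>. fst X \<inter> snd X = {} \<and> supp X \<subseteq> E) \<and>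
     (\<forall>X\<in>\<C>. supp X \<noteq> {}) \<and>
     (\<forall>X\<in>\<C>. neg_ss X \<in> \<C>) \<and>
     (\<forall>X\<in>\<C>. \<forall>Y\<in>\<C>. supp X \<subseteq> supp Y \<longrightarrow> X = Y \<or> X = neg_ss Y) \<and>
     (\<forall>X\<in>\<C>. \<forall>Y\<in>\<C>. \<forall>e. X \<noteq> neg_ss Y \<and> e \<in> fst X \<inter> snd Y \<longrightarrow>
        (\<exists>Z\<in>\<C>. fst Z \<subseteq> (fst X \<union> fst Y) - {e} \<and> snd Z \<subseteq> (snd X \<union> snd Y) - {e}))"

text \<open>Simple: no loops (circuits of size 1) and no parallel pairs (circuits of size 2).\<close>
definition simple_om :: "'a signed_set set \<Rightarrow> bool" where
  "simple_om \<C> \<longleftrightarrow> (\<forall>X\<in>\<C>. card (supp X) \<ge> 3)"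

definition acyclic_om :: "'a signed_set set \<Rightarrow> bool" where
  "acyclic_om \<C> \<longleftrightarrow> (\<forall>X\<in>\<C>. snd X \<noteq> {})"

inductive_set vectors :: "'a signed_set set \<Rightarrow> 'a signed_set set" for \<C> where
  zero: "({}, {}) \<in> vectors \<C>"
| comp: "X \<in> \<C> \<Longrightarrow> V \<in> vectors \<C> \<Longrightarrow> comp_ss X V \<in> vectors \<C>"

text \<open>Circuits of the rank 2 uniform oriented matroid M(<) on E, for a strict order r.\<close>
definition circuits_M_order :: "'a set \<Rightarrow> ('a \<times> 'a) set \<Rightarrow> 'a signed_set set" where
  "circuits_M_order E r =
     {({e1, e3}, {e2}) | e1 e2 e3. e1 \<in> E \<and> e2 \<in> E \<and> e3 \<in> E \<and> (e1, e2) \<in> r \<and> (e2, e3) \<in> r}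
   \<union> {({e2}, {e1, e3}) | e1 e2 e3. e1 \<in> E \<and> e2 \<in> E \<and> e3 \<in> E \<and> (e1, e2) \<in> r \<and> (e2, e3) \<in> r}"

definition strong_map :: "'a signed_set set \<Rightarrow> 'a signed_set set \<Rightarrow> bool" where
  "strong_map \<C>1 \<C>2 \<longleftrightarrow> \<C>1 \<subseteq> vectors \<C>2"

end

theory Submission imports Defs begin

text \<open>Build the order greedily from below, keeping the set I of elements placed so far
cut-compatible: no circuit is positive on I and negative off I. A next element always exists,
by induction on the set of candidates: delete a candidate h and extend by some e for the
deletion; if e fails for the whole matroid, eliminating h between the offending circuit and any
circuit blocking h gives a contradiction, so h itself works. Simplicity excludes the case where
these two circuits are opposite, as their support would lie in {e, h}.

Once all initial segments are cut-compatible, the positive and negative parts of every circuit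
(and of its negative) interleave in the order. An interleaving signed set is the composition of
the conformal circuits of M(<) it contains, hence a vector of M(<).\<close>

definition cut_compatible :: "'a signed_set set \<Rightarrow> 'a set \<Rightarrow> bool" where
  "cut_compatible C I \<longleftrightarrow> (\<forall>X\<in>C. \<not> (fst X \<subseteq> I \<and> snd X \<inter> I = {}))"

locale acyclic_simple_circuits =
  fixes C :: "'a signed_set set"
  assumes disjoint: "X \<in> C \<Longrightarrow> fst X \<inter> snd X = {}"
    and elimination: "\<lbrakk>X \<in> C; Y \<in> C; X \<noteq> neg_ss Y; e \<in> fst X \<inter> snd Y\<rbrakk> \<Longrightarrow>
      \<exists>Z\<in>C. fst Z \<subseteq> (fst X \<union> fst Y) - {e} \<and> snd Z \<subseteq> (snd X \<union> snd Y) - {e}"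
    and card_supp: "X \<in> C \<Longrightarrow> 3 \<le> card (supp X)"
    and snd_nonempty: "X \<in> C \<Longrightarrow> snd X \<noteq> {}"

lemma acyclic_simple_circuitsI:
  assumes "oriented_matroid E C" "simple_om C" "acyclic_om C"
  shows "acyclic_simple_circuits C"
proof -
  note om = assms(1)[unfolded oriented_matroid_def]
  show ?thesis
  proof
    show "fst X \<inter> snd X = {}" if "X \<in> C" for X
      using om[THEN conjunct1] that by blast
    show "\<exists>Z\<in>C. fst Z \<subseteq> (fst X \<union> fst Y) - {e} \<and> snd Z \<subseteq> (snd X \<union> snd Y) - {e}"
      if "X \<in> C" "Y \<in> C" "X \<noteq> neg_ss Y" "e \<in> fst X \<inter> snd Y" for X Y e
      using om[THEN conjunct2, THEN conjunct2, THEN conjunct2, THEN conjunct2] that by blast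
    show "3 \<le> card (supp X)" if "X \<in> C" for X
      using assms(2) that unfolding simple_om_def by blast
    show "snd X \<noteq> {}" if "X \<in> C" for X
      using assms(3) that unfolding acyclic_om_def by blast
  qed
qed

lemma acyclic_simple_circuits_deletion:
  assumes "acyclic_simple_circuits C"
  shows "acyclic_simple_circuits {X \<in> C. h \<notin> supp X}"
proof -
  interpret acyclic_simple_circuits C by fact
  show ?thesis
  proof
    fix X Y e
    assume X: "X \<in> {X \<in> C. h \<notin> supp X}" and Y: "Y \<in> {X \<in> C. h \<notin> supp X}"
      and "X \<noteq> neg_ss Y" "e \<in> fst X \<inter> snd Y"
    then obtain Z where "Z \<in> C" "fst Z \<subseteq> (fst X \<union> fst Y) - {e}" "snd Z \<subseteq> (snd X \<union> snd Y) - {e}"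
      using elimination by blast
    moreover from this X Y have "h \<notin> supp Z" by (auto simp: supp_def)
    ultimately show "\<exists>Z\<in>{X \<in> C. h \<notin> supp X}.
        fst Z \<subseteq> (fst X \<union> fst Y) - {e} \<and> snd Z \<subseteq> (snd X \<union> snd Y) - {e}"
      by blast
  qed (simp_all add: disjoint card_supp snd_nonempty)
qed

lemma (in acyclic_simple_circuits) cut_compatible_insert_deleted:
  assumes K: "cut_compatible C K"
    and deletion: "cut_compatible {X \<in> C. h \<notin> supp X} (insert e K)"
    and not_e: "\<not> cut_compatible C (insert e K)"
    and "h \<notin> K" "h \<noteq> e"
  shows "cut_compatible C (insert h K)"
  unfolding cut_compatible_def
proof (intro ballI notI)
  fix Y assume Y: "Y \<in> C" "fst Y \<subseteq> insert h K \<and> snd Y \<inter> insert h K = {}"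
  from not_e obtain X where X: "X \<in> C" "fst X \<subseteq> insert e K" "snd X \<inter> insert e K = {}"
    unfolding cut_compatible_def by blast
  have "h \<in> supp X"
    using deletion X unfolding cut_compatible_def by blast
  with X assms(4,5) have hX: "h \<in> snd X" by (auto simp: supp_def)
  have hY: "h \<in> fst Y"
    using K Y unfolding cut_compatible_def by blast
  have "Y \<noteq> neg_ss X"
  proof
    assume "Y = neg_ss X"
    with X Y have "supp X \<subseteq> {e, h}" by (auto simp: neg_ss_def supp_def)
    then have "card (supp X) \<le> card {e, h}" by (intro card_mono) auto
    also have "\<dots> \<le> 2" by (simp add: card_insert_le_m1)
    finally show False using card_supp[OF X(1)] by simp
  qed
  then obtain Z where Z: "Z \<in> C" "fst Z \<subseteq> (fst Y \<union> fst X) - {h}" "snd Z \<subseteq> (snd Y \<union> snd X) - {h}"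
    using elimination[OF Y(1) X(1)] hX hY by blast
  have "fst Z \<subseteq> insert e K" "snd Z \<inter> K = {}"
    using X Y Z by auto
  show False
  proof (cases "e \<in> snd Z")
    case True
    with disjoint[OF Z(1)] \<open>fst Z \<subseteq> insert e K\<close> have "fst Z \<subseteq> K" by blast
    with K Z(1) \<open>snd Z \<inter> K = {}\<close> show False
      unfolding cut_compatible_def by blast
  next
    case False
    moreover have "h \<notin> supp Z" using Z by (auto simp: supp_def)
    ultimately show False
      using deletion Z(1) \<open>fst Z \<subseteq> insert e K\<close> \<open>snd Z \<inter> K = {}\<close>
      unfolding cut_compatible_def by blast
  qed
qed

lemma cut_compatible_extend:
  assumes "acyclic_simple_circuits C" "finite J" "J \<noteq> {}"
    and "\<forall>X\<in>C. supp X \<subseteq> K \<union> J" "cut_compatible C K"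
  shows "\<exists>e\<in>J. cut_compatible C (insert e K)"
  using assms(2,1,3-)
proof (induction J arbitrary: C rule: finite_induct)
  case empty
  then show ?case by simp
next
  case (insert h J C)
  interpret acyclic_simple_circuits C by fact
  consider "h \<in> K" | "J = {}" | "h \<notin> K" "J \<noteq> {}" by blast
  then show ?case
  proof cases
    case 1
    then show ?thesis using insert.prems(4) by (simp add: insert_absorb)
  next
    case 2
    have "cut_compatible C (insert h K)"
      unfolding cut_compatible_def
    proof (intro ballI notI)
      fix X assume "X \<in> C" "fst X \<subseteq> insert h K \<and> snd X \<inter> insert h K = {}"
      moreover have "snd X \<subseteq> insert h K"
        using insert.prems(3) \<open>X \<in> C\<close> 2 by (auto simp: supp_def)
      ultimately show False using snd_nonempty by blast
    qed
    then show ?thesis by simp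
  next
    case 3
    let ?C' = "{X \<in> C. h \<notin> supp X}"
    have "\<exists>e\<in>J. cut_compatible ?C' (insert e K)"
    proof (rule insert.IH)
      show "acyclic_simple_circuits ?C'"
        using insert.prems(1) by (rule acyclic_simple_circuits_deletion)
      show "\<forall>X\<in>?C'. supp X \<subseteq> K \<union> J" using insert.prems(3) by auto
      show "cut_compatible ?C' K" using insert.prems(4) unfolding cut_compatible_def by auto
    qed fact
    then obtain e where e: "e \<in> J" "cut_compatible ?C' (insert e K)" by blast
    show ?thesis
    proof (cases "cut_compatible C (insert e K)")
      case False
      have "h \<noteq> e" using e(1) insert.hyps(2) by blast
      with cut_compatible_insert_deleted[OF insert.prems(4) e(2) False] 3
      show ?thesis by blast
    qed (use e(1) in blast)
  qed
qed

lemma exists_cut_compatible_numbering: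
  assumes "acyclic_simple_circuits C" "finite E" "\<forall>X\<in>C. supp X \<subseteq> E"
    and "cut_compatible C I"
  shows "\<exists>p :: 'a \<Rightarrow> nat. inj_on p (E - I) \<and> (\<forall>k. cut_compatible C (I \<union> {y \<in> E - I. p y < k}))"
  using assms(4)
proof (induction "card (E - I)" arbitrary: I rule: less_induct)
  case less
  show ?case
  proof (cases "E - I = {}")
    case True
    show ?thesis
      unfolding True using less.prems by (intro exI[of _ "\<lambda>_. 0"]) simp
  next
    case False
    have "\<forall>X\<in>C. supp X \<subseteq> I \<union> (E - I)" using assms(3) by blast
    then obtain e where e: "e \<in> E - I" "cut_compatible C (insert e I)"
      using cut_compatible_extend[OF assms(1) _ False _ less.prems] assms(2) by blast
    have "card (E - insert e I) < card (E - I)"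
      using e(1) assms(2) by (metis Diff_insert card_Diff1_less finite_Diff)
    then obtain q :: "'a \<Rightarrow> nat" where q: "inj_on q (E - insert e I)"
      "\<forall>k. cut_compatible C (insert e I \<union> {y \<in> E - insert e I. q y < k})"
      using less.hyps e(2) by blast
    define p where "p y = (if y = e then 0 else Suc (q y))" for y
    have "inj_on p (E - I)" using q(1) unfolding p_def inj_on_def by auto
    moreover have "cut_compatible C (I \<union> {y \<in> E - I. p y < k})" for k
    proof (cases k)
      case 0
      then show ?thesis using less.prems by simp
    next
      case (Suc m)
      then have "I \<union> {y \<in> E - I. p y < k} = insert e I \<union> {y \<in> E - insert e I. q y < m}"
        using e(1) unfolding p_def by auto
      then show ?thesis using q(2) by simp
    qed
    ultimately show ?thesis by blast
  qed
qed

lemma cut_compatible_interleave: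
  fixes p :: "'a \<Rightarrow> nat"
  assumes cuts: "\<forall>k. cut_compatible C {y \<in> E. p y < k}"
    and "inj_on p E" "finite E" "X \<in> C" "supp X \<subseteq> E" "fst X \<inter> snd X = {}" "snd X \<noteq> {}"
  shows "\<exists>a\<in>fst X. \<exists>b\<in>snd X. p b < p a"
proof (rule ccontr)
  assume below: "\<not> ?thesis"
  have fin: "finite (snd X)" using assms(3,5) finite_subset by (auto simp: supp_def)
  define k where "k = Min (p ` snd X)"
  have "fst X \<subseteq> {y \<in> E. p y < k}"
  proof
    fix a assume a: "a \<in> fst X"
    have "k \<in> p ` snd X"
      unfolding k_def using fin assms(7) by (intro Min_in) auto
    then obtain b where b: "b \<in> snd X" "k = p b" by blast
    have "a \<in> E" "b \<in> E" "a \<noteq> b"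
      using assms(5,6) a b(1) by (auto simp: supp_def)
    then have "p a \<noteq> p b" using inj_on_eq_iff[OF assms(2)] by blast
    moreover have "\<not> p b < p a" using below a b(1) by blast
    ultimately have "p a < k" using b(2) by simp
    then show "a \<in> {y \<in> E. p y < k}" using \<open>a \<in> E\<close> by blast
  qed
  moreover have "k \<le> p b" if "b \<in> snd X" for b
    unfolding k_def using fin that by (auto intro: Min_le)
  then have "snd X \<inter> {y \<in> E. p y < k} = {}" by fastforce
  ultimately show False
    using cuts assms(4) unfolding cut_compatible_def by blast
qed

lemma strict_linear_order_on_inj_numbering:
  fixes p :: "'a \<Rightarrow> 'b :: linorder"
  assumes "inj_on p E"
  shows "strict_linear_order_on E {(a, b). a \<in> E \<and> b \<in> E \<and> p a < p b}"
  unfolding strict_linear_order_on_def trans_def irrefl_def total_on_def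
  using assms by (auto simp: inj_on_def) (meson linorder_neqE)

lemma circuits_M_order_neg: "T \<in> circuits_M_order E r \<Longrightarrow> neg_ss T \<in> circuits_M_order E r"
  unfolding circuits_M_order_def neg_ss_def by auto

lemma conformal_circuit_M_order:
  assumes "total_on E r" "A \<subseteq> E" "B \<subseteq> E" "A \<inter> B = {}"
    and "a1 \<in> A" "b1 \<in> B" "(a1, b1) \<in> r"
    and "a2 \<in> A" "b2 \<in> B" "(b2, a2) \<in> r"
    and "x \<in> A"
  shows "\<exists>T\<in>circuits_M_order E r. fst T \<subseteq> A \<and> snd T \<subseteq> B \<and> x \<in> fst T"
proof -
  have comparable: "(b, x) \<in> r \<or> (x, b) \<in> r" if "b \<in> B" for b
  proof -
    have "b \<in> E" "x \<in> E" "b \<noteq> x" using assms(2-4,11) that by auto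
    then show ?thesis using assms(1) unfolding total_on_def by blast
  qed
  consider (between) b b' where "b \<in> B" "b' \<in> B" "(b, x) \<in> r" "(x, b') \<in> r"
    | (lowest) "(x, b2) \<in> r" | (highest) "(b1, x) \<in> r"
    using comparable assms(6,9) by blast
  then show ?thesis
  proof cases
    case between
    then have T: "({x}, {b, b'}) \<in> circuits_M_order E r"
      using assms(2,3,11) unfolding circuits_M_order_def by blast
    show ?thesis
      by (rule bexI[OF _ T]) (use between assms(11) in auto)
  next
    case lowest
    then have T: "({x, a2}, {b2}) \<in> circuits_M_order E r"
      using assms(2,3,8-11) unfolding circuits_M_order_def by blast
    show ?thesis
      by (rule bexI[OF _ T]) (use assms(8,9,11) in auto)
  next
    case highest
    then have T: "({a1, x}, {b1}) \<in> circuits_M_order E r"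
      using assms(2,3,5-7,11) unfolding circuits_M_order_def by blast
    show ?thesis
      by (rule bexI[OF _ T]) (use assms(5,6,11) in auto)
  qed
qed

lemma Union_conformal_in_vectors:
  assumes "finite S" "S \<subseteq> C" "\<forall>T\<in>S. fst T \<subseteq> A \<and> snd T \<subseteq> B" "A \<inter> B = {}"
  shows "((\<Union>T\<in>S. fst T), (\<Union>T\<in>S. snd T)) \<in> vectors C"
  using assms
proof (induction S rule: finite_induct)
  case empty
  then show ?case using vectors.zero by simp
next
  case (insert T S)
  have "\<forall>T'\<in>insert T S. \<forall>T''\<in>insert T S. fst T' \<inter> snd T'' = {}"
    using insert.prems(2,3) by blast
  then have "comp_ss T ((\<Union>T\<in>S. fst T), (\<Union>T\<in>S. snd T)) =
      ((\<Union>T\<in>insert T S. fst T), (\<Union>T\<in>insert T S. snd T))"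
    unfolding comp_ss_def prod_eq_iff by auto
  moreover have "comp_ss T ((\<Union>T\<in>S. fst T), (\<Union>T\<in>S. snd T)) \<in> vectors C"
    using insert by (intro vectors.comp) auto
  ultimately show ?case by simp
qed

lemma interleaved_in_vectors_M_order:
  assumes "finite E" "total_on E r" "A \<subseteq> E" "B \<subseteq> E" "A \<inter> B = {}"
    and "a1 \<in> A" "b1 \<in> B" "(a1, b1) \<in> r"
    and "a2 \<in> A" "b2 \<in> B" "(b2, a2) \<in> r"
  shows "(A, B) \<in> vectors (circuits_M_order E r)"
proof -
  define S where "S = {T \<in> circuits_M_order E r. fst T \<subseteq> A \<and> snd T \<subseteq> B}"
  have "finite S"
  proof (rule finite_subset)
    show "S \<subseteq> Pow E \<times> Pow E" unfolding S_def circuits_M_order_def by auto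
  qed (use assms(1) in simp)
  then have "((\<Union>T\<in>S. fst T), (\<Union>T\<in>S. snd T)) \<in> vectors (circuits_M_order E r)"
    by (rule Union_conformal_in_vectors[OF _ _ _ assms(5)]) (auto simp: S_def)
  moreover have "(\<Union>T\<in>S. fst T) = A"
    using conformal_circuit_M_order[OF assms(2-)] unfolding S_def by blast
  moreover have "(\<Union>T\<in>S. snd T) = B"
  proof -
    have "\<exists>T\<in>S. x \<in> snd T" if x: "x \<in> B" for x
    proof -
      have BA: "B \<inter> A = {}" using assms(5) by blast
      obtain T where T: "T \<in> circuits_M_order E r" "fst T \<subseteq> B" "snd T \<subseteq> A" "x \<in> fst T"
        using conformal_circuit_M_order[OF assms(2,4,3) BA assms(10,9,11,7,6,8) x] by blast
      then have "neg_ss T \<in> S" "x \<in> snd (neg_ss T)"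
        using circuits_M_order_neg[OF T(1)] unfolding S_def neg_ss_def by auto
      then show ?thesis by blast
    qed
    then show ?thesis unfolding S_def by blast
  qed
  ultimately show ?thesis by simp
qed

lemma strong_map_M_order_numbering:
  fixes p :: "'a \<Rightarrow> nat"
  assumes "acyclic_simple_circuits C" "finite E" "\<forall>X\<in>C. supp X \<subseteq> E" "\<forall>X\<in>C. neg_ss X \<in> C"
    and p: "inj_on p E" "\<forall>k. cut_compatible C {y \<in> E. p y < k}"
  shows "strong_map C (circuits_M_order E {(a, b). a \<in> E \<and> b \<in> E \<and> p a < p b})"
proof -
  interpret acyclic_simple_circuits C by fact
  define r where "r = {(a, b). a \<in> E \<and> b \<in> E \<and> p a < p b}"
  have total: "total_on E r"
    using strict_linear_order_on_inj_numbering[OF p(1)]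
    unfolding r_def strict_linear_order_on_def by blast
  have interleave: "\<exists>a\<in>fst X. \<exists>b\<in>snd X. (b, a) \<in> r" if "X \<in> C" for X
  proof -
    have "supp X \<subseteq> E" using assms(3) that by blast
    with cut_compatible_interleave[OF p(2,1) assms(2) that] disjoint[OF that] snd_nonempty[OF that]
    show ?thesis unfolding r_def supp_def by blast
  qed
  have "X \<in> vectors (circuits_M_order E r)" if X: "X \<in> C" for X
  proof -
    obtain a b where ab: "a \<in> fst X" "b \<in> snd X" "(b, a) \<in> r"
      using interleave[OF X] by blast
    obtain a' b' where a'b': "a' \<in> snd X" "b' \<in> fst X" "(b', a') \<in> r"
      using interleave[of "neg_ss X"] assms(4) X unfolding neg_ss_def by auto
    have E: "fst X \<subseteq> E" "snd X \<subseteq> E" using assms(3) X unfolding supp_def by auto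
    have "(fst X, snd X) \<in> vectors (circuits_M_order E r)"
      using interleaved_in_vectors_M_order[OF assms(2) total E disjoint[OF X] a'b'(2,1,3) ab] .
    then show ?thesis by simp
  qed
  then show ?thesis
    unfolding strong_map_def r_def by blast
qed

theorem lemmal:
  fixes E :: "'a set" and \<C> :: "'a signed_set set"
  assumes "finite E"
    and "oriented_matroid E \<C>"
    and "simple_om \<C>"
    and "acyclic_om \<C>"
  shows "\<exists>r. r \<subseteq> E \<times> E \<and> strict_linear_order_on E r \<and>
             strong_map \<C> (circuits_M_order E r)"
proof -
  interpret acyclic_simple_circuits \<C>
    using assms(2-4) by (rule acyclic_simple_circuitsI)
  have supp_E: "\<forall>X\<in>\<C>. supp X \<subseteq> E" and neg: "\<forall>X\<in>\<C>. neg_ss X \<in> \<C>"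
    using assms(2) unfolding oriented_matroid_def by auto
  have "cut_compatible \<C> {}"
    using neg snd_nonempty unfolding cut_compatible_def neg_ss_def by fastforce
  from exists_cut_compatible_numbering[OF acyclic_simple_circuits_axioms assms(1) supp_E this]
  obtain p :: "'a \<Rightarrow> nat" where p: "inj_on p E" "\<forall>k. cut_compatible \<C> {y \<in> E. p y < k}"
    by auto
  let ?r = "{(a, b). a \<in> E \<and> b \<in> E \<and> p a < p b}"
  have "?r \<subseteq> E \<times> E" by blast
  with strict_linear_order_on_inj_numbering[OF p(1)]
    strong_map_M_order_numbering[OF acyclic_simple_circuits_axioms assms(1) supp_E neg p]
  show ?thesis by blast
qed

end
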